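(* There is an $\epsilon>0$ and a unique family of complex functions $\{R_{i,j}^{(k)}:D_{1+\epsilon}\to\mathbb C : i\neq j,\ 1\le i,j\le N,\ k\in\{-1,1\}\}$, where $D_r=\{z\in\mathbb C:|z|<r\}$, satisfying: (R1) each $R_{i,j}^{(k)}$ is complex analytic in $D_{1+\epsilon}$; (R2) if $\lambda\in[0,1]$ then $R_{i,j}^{(k)}(\lambda)\in(0,1)$; (R3) for all $\lambda\in D_{1+\epsilon}$ and all $i\ne j$, $k$, $$R_{i,j}^{(k)}=\lambda\Big[p_{i,j}^{(k)}+\sum_{m\neq i,j}p_{i,m}^{(k)}R_{m,j}^{(k)}+\sum_{m\neq i}p_{i,m}^{(-k)}R_{m,i}^{(-k)}R_{i,j}^{(k)}\Big].$$
   Context: Fix an integer $N\ge3$ and numbers $p_{i,j}^{(k)}\in(0,1)$ for $i\ne j\in\{1,\dots,N\}$, $k\in\{-1,1\}$, satisfying $\sum_{j\ne i}\sum_{k=\pm1}p_{i,j}^{(k)}=1$ for each $i$. (These are the transition probabilities of a Markov chain on the fundamental groupoid generated by arrows $A_{i,j}^{(k)}$, which from an arrow with target $i$ appends $A_{i,j}^{(k)}$ with probability $p_{i,j}^{(k)}$; but the statement only involves these numbers.) *)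

theory Defs
  imports "HOL-Analysis.Analysis"
begin

definition arrow_idx :: "nat \<Rightarrow> nat \<Rightarrow> nat \<Rightarrow> int \<Rightarrow> bool" where
  "arrow_idx N i j k \<longleftrightarrow> i \<in> {1..N} \<and> j \<in> {1..N} \<and> i \<noteq> j \<and> k \<in> {-1, 1}"

definition R_family ::
  "nat \<Rightarrow> (nat \<Rightarrow> nat \<Rightarrow> int \<Rightarrow> real) \<Rightarrow> real \<Rightarrow> (nat \<Rightarrow> nat \<Rightarrow> int \<Rightarrow> complex \<Rightarrow> complex) \<Rightarrow> bool"
  where
  "R_family N p eps R \<longleftrightarrow>
     (\<forall>i j k. arrow_idx N i j k \<longrightarrow> R i j k holomorphic_on ball 0 (1 + eps)) \<and>
     (\<forall>i j k. arrow_idx N i j k \<longrightarrow>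
        (\<forall>l::real. 0 < l \<and> l \<le> 1 \<longrightarrow>
           (\<exists>r::real. 0 < r \<and> r < 1 \<and> R i j k (complex_of_real l) = complex_of_real r))) \<and>
     (\<forall>i j k. arrow_idx N i j k \<longrightarrow>
        (\<forall>z \<in> ball 0 (1 + eps).
           R i j k z = z * (complex_of_real (p i j k)
              + (\<Sum>m \<in> {1..N} - {i, j}. complex_of_real (p i m k) * R m j k z)
              + (\<Sum>m \<in> {1..N} - {i}. complex_of_real (p i m (-k)) * R m i (-k) z * R i j k z))))"

end

(*
  Write (R3) as R = \<lambda> \<cdot> Phi(R) for the quadratic map Phi with nonnegative coefficients;
  for \<lambda> = 1 the constant family 1 is a fixed point of Phi.  The walks along k-arrows have
  stationary measures, and solving their Poisson (hitting-cost) equations with suitably balanced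
  costs yields, via the cycle formula, a positive direction v with Phi'(1) v > v; this is where
  N \<ge> 3 enters.  Hence u = 1 - \<epsilon> v is a strict supersolution: \<rho> Phi(u) \<le> u with \<rho> > 1.

  The Picard iterates x_0 = 0, x_(n+1) = \<lambda> Phi(x_n) increase for real \<lambda> = t \<in> [0, \<rho>],
  stay below u, and dominate, together with their increments, the iterates at every complex
  \<lambda> with |\<lambda>| \<le> t.  So they converge uniformly on the closed disc of radius \<rho> to a
  holomorphic solution, which lies in (0, 1) on (0, 1].

  Any solution vanishes at 0, and near 0 the map \<lambda> Phi is a contraction on the unit
  polydisc; two solutions therefore agree near 0, hence everywhere by analytic continuation.
*)

theory Submission
  imports Defs "HOL-Complex_Analysis.Complex_Analysis"
begin

lemma finite_positive_lower_bound:
  fixes f :: "'a \<Rightarrow> real"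
  assumes "finite A" and "\<And>a. a \<in> A \<Longrightarrow> 0 < f a"
  obtains d where "0 < d" and "d \<le> 1" and "\<And>a. a \<in> A \<Longrightarrow> d \<le> f a"
proof
  show "0 < Min (insert 1 (f ` A))" using assms by auto
  show "Min (insert 1 (f ` A)) \<le> 1" using assms(1) by simp
  show "Min (insert 1 (f ` A)) \<le> f a" if "a \<in> A" for a
    using assms(1) that by (intro Min_le) auto
qed

lemma one_add_mult_le:
  fixes x u \<eta> :: real
  assumes "x \<le> u - \<eta>" and "u \<le> 1" and "0 \<le> \<eta>"
  shows "(1 + \<eta>) * x \<le> u"
proof -
  have "(1 + \<eta>) * x \<le> (1 + \<eta>) * (u - \<eta>)" using assms by (intro mult_left_mono) auto
  moreover have "\<eta> * u \<le> \<eta> * 1" using assms by (intro mult_left_mono) auto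
  moreover have "0 \<le> \<eta> * \<eta>" by simp
  ultimately show ?thesis unfolding ring_distribs by linarith
qed

lemma sum_swap_off_diagonal:
  assumes "finite S"
  shows "(\<Sum>m\<in>S. \<Sum>l\<in>S-{m}. g m l) = (\<Sum>l\<in>S. \<Sum>m\<in>S-{l}. g m l)"
proof -
  have "(\<Sum>m\<in>S. \<Sum>l\<in>S-{m}. g m l) = (\<Sum>m\<in>S. \<Sum>l\<in>S. if l = m then 0 else g m l)"
    using assms by (simp add: sum.delta_remove)
  also have "\<dots> = (\<Sum>l\<in>S. \<Sum>m\<in>S. if m = l then 0 else g m l)"
    by (subst sum.swap) (intro sum.cong refl, auto)
  also have "\<dots> = (\<Sum>l\<in>S. \<Sum>m\<in>S-{l}. g m l)"
    using assms by (simp add: sum.delta_remove)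
  finally show ?thesis .
qed

lemma norm_mult_diff_le:
  fixes x x' y y' :: "'a::real_normed_algebra"
  assumes "norm x \<le> X" "norm (x - x') \<le> X - X'" "norm y' \<le> Y'" "norm (y - y') \<le> Y - Y'"
  shows "norm (x * y - x' * y') \<le> X * Y - X' * Y'"
proof -
  have "x * y - x' * y' = x * (y - y') + (x - x') * y'" by (simp add: algebra_simps)
  then have "norm (x * y - x' * y') \<le> norm x * norm (y - y') + norm (x - x') * norm y'"
    by (metis norm_triangle_le add_mono norm_mult_ineq)
  also have "\<dots> \<le> X * (Y - Y') + (X - X') * Y'"
    using assms order_trans[OF norm_ge_zero] by (intro add_mono mult_mono) blast+
  finally show ?thesis by (simp add: algebra_simps)
qed

lemma sum_ratios_gt_two:
  fixes r :: "'a \<Rightarrow> real"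
  assumes "finite V" "3 \<le> card V" "i \<in> V" and r_pos: "\<And>m. m \<in> V \<Longrightarrow> 0 < r m"
  shows "2 < (\<Sum>m\<in>V-{i}. (\<Sum>l\<in>V-{m}. r l) / r m)"
proof -
  have "2 \<le> card (V - {i})" using assms(1-3) by simp
  then obtain a b where ab: "{a, b} \<subseteq> V - {i}" "a \<noteq> b"
    by (metis obtain_subset_with_card_n card_2_iff)
  have others_nonneg: "0 \<le> (\<Sum>l\<in>V-{m}. r l) / r m" if "m \<in> V" for m
    using r_pos that by (intro divide_nonneg_pos sum_nonneg) (auto intro: less_imp_le)
  have "(\<Sum>m\<in>{a,b}. (\<Sum>l\<in>V-{m}. r l) / r m) \<le> (\<Sum>m\<in>V-{i}. (\<Sum>l\<in>V-{m}. r l) / r m)"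
    using assms(1) ab others_nonneg by (intro sum_mono2) auto
  moreover have "(\<Sum>l\<in>{b,i}. r l) \<le> (\<Sum>l\<in>V-{a}. r l)"
    using assms ab by (intro sum_mono2) (auto intro: less_imp_le)
  then have "(r b + r i) / r a \<le> (\<Sum>l\<in>V-{a}. r l) / r a"
    using r_pos[of a] ab by (intro divide_right_mono) auto
  moreover have "r a / r b \<le> (\<Sum>l\<in>V-{b}. r l) / r b"
    using assms ab by (intro divide_right_mono member_le_sum) (auto intro: less_imp_le)
  moreover have "2 * (r a * r b) \<le> r a * r a + r b * r b"
    using sum_squares_bound[of "r a" "r b"] by (simp add: power2_eq_square)
  then have "2 \<le> r b / r a + r a / r b"
    using r_pos[of a] r_pos[of b] ab by (simp add: field_simps)
  moreover have "r b / r a < (r b + r i) / r a"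
    using r_pos[of a] r_pos[of i] ab assms(3) by (simp add: divide_strict_right_mono)
  ultimately show ?thesis using ab by simp
qed

lemma exists_cross_dominated_costs:
  fixes \<alpha> \<beta> :: "'a \<Rightarrow> real"
  assumes V: "finite V" "3 \<le> card V"
    and pos: "\<And>m. m \<in> V \<Longrightarrow> 0 < \<alpha> m" "\<And>m. m \<in> V \<Longrightarrow> 0 < \<beta> m"
  obtains s t where "\<And>i. i \<in> V \<Longrightarrow> 0 < s i" "\<And>i. i \<in> V \<Longrightarrow> 0 < t i"
    and "\<And>i. i \<in> V \<Longrightarrow> \<beta> i * s i < (\<Sum>m\<in>V-{i}. \<beta> m * t m)"
    and "\<And>i. i \<in> V \<Longrightarrow> \<alpha> i * t i < (\<Sum>m\<in>V-{i}. \<alpha> m * s m)"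
proof
  define r where "r m = \<beta> m / \<alpha> m" for m
  have r_pos: "0 < r m" if "m \<in> V" for m using pos that by (simp add: r_def)
  have others_pos: "0 < (\<Sum>l\<in>V-{i}. r l)" if "i \<in> V" for i
  proof -
    have "2 \<le> card (V - {i})" using V that by simp
    then have "V - {i} \<noteq> {}" by (metis card.empty not_numeral_le_zero)
    then show ?thesis using V r_pos by (intro sum_pos) auto
  qed
  fix i assume i: "i \<in> V"
  show "0 < (\<Sum>l\<in>V-{i}. r l) / \<beta> i" using others_pos[OF i] pos(2)[OF i] by simp
  show "0 < 2 / \<alpha> i" using pos(1)[OF i] by simp
  have "(\<Sum>m\<in>V-{i}. \<beta> m * (2 / \<alpha> m)) = 2 * (\<Sum>l\<in>V-{i}. r l)"
    unfolding r_def sum_distrib_left by (intro sum.cong refl) simp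
  then show "\<beta> i * ((\<Sum>l\<in>V-{i}. r l) / \<beta> i) < (\<Sum>m\<in>V-{i}. \<beta> m * (2 / \<alpha> m))"
    using others_pos[OF i] pos(2)[OF i] by simp
  have "(\<Sum>m\<in>V-{i}. \<alpha> m * ((\<Sum>l\<in>V-{m}. r l) / \<beta> m)) = (\<Sum>m\<in>V-{i}. (\<Sum>l\<in>V-{m}. r l) / r m)"
    using pos by (intro sum.cong refl) (simp add: r_def)
  then show "\<alpha> i * (2 / \<alpha> i) < (\<Sum>m\<in>V-{i}. \<alpha> m * ((\<Sum>l\<in>V-{m}. r l) / \<beta> m))"
    using sum_ratios_gt_two[OF V i r_pos] pos(1)[OF i] by simp
qed

section \<open>Nonnegative linear systems\<close>

primrec lin_iter ::
  "'i set \<Rightarrow> ('i \<Rightarrow> real) \<Rightarrow> ('i \<Rightarrow> real) \<Rightarrow> ('i \<Rightarrow> 'i \<Rightarrow> real) \<Rightarrow> nat \<Rightarrow> 'i \<Rightarrow> real" where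
  "lin_iter S d b q 0 = (\<lambda>i. 0)"
| "lin_iter S d b q (Suc n) = (\<lambda>i. (b i + (\<Sum>l\<in>S-{i}. q i l * lin_iter S d b q n l)) / d i)"

locale nonneg_linear_system =
  fixes S :: "'i set" and d b :: "'i \<Rightarrow> real" and q :: "'i \<Rightarrow> 'i \<Rightarrow> real"
  assumes finite: "finite S"
    and d_pos: "\<And>i. i \<in> S \<Longrightarrow> 0 < d i"
    and b_nonneg: "\<And>i. i \<in> S \<Longrightarrow> 0 \<le> b i"
    and q_nonneg: "\<And>i l. i \<in> S \<Longrightarrow> l \<in> S \<Longrightarrow> l \<noteq> i \<Longrightarrow> 0 \<le> q i l"
begin

abbreviation "iter \<equiv> lin_iter S d b q"

lemma iter_nonneg: "i \<in> S \<Longrightarrow> 0 \<le> iter n i"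
proof (induction n arbitrary: i)
  case (Suc n)
  have "0 \<le> (\<Sum>l\<in>S-{i}. q i l * iter n l)"
    using Suc q_nonneg by (intro sum_nonneg mult_nonneg_nonneg) auto
  then show ?case using Suc.prems d_pos[of i] b_nonneg[of i] by simp
qed simp

lemma iter_mono: "i \<in> S \<Longrightarrow> iter n i \<le> iter (Suc n) i"
proof (induction n arbitrary: i)
  case 0
  then show ?case using d_pos[of i] b_nonneg[of i] by simp
next
  case (Suc n)
  have "(\<Sum>l\<in>S-{i}. q i l * iter n l) \<le> (\<Sum>l\<in>S-{i}. q i l * iter (Suc n) l)"
    using Suc q_nonneg by (intro sum_mono mult_left_mono) auto
  then show ?case using d_pos[OF Suc.prems] by (simp add: divide_right_mono)
qed

lemma iter_le_supersolution:
  assumes "\<And>i. i \<in> S \<Longrightarrow> 0 \<le> g i"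
    and "\<And>i. i \<in> S \<Longrightarrow> b i + (\<Sum>l\<in>S-{i}. q i l * g l) \<le> d i * g i"
  shows "i \<in> S \<Longrightarrow> iter n i \<le> g i"
proof (induction n arbitrary: i)
  case (Suc n)
  have "b i + (\<Sum>l\<in>S-{i}. q i l * iter n l) \<le> b i + (\<Sum>l\<in>S-{i}. q i l * g l)"
    using Suc q_nonneg by (intro add_left_mono sum_mono mult_left_mono) auto
  also have "\<dots> \<le> d i * g i" using assms(2) Suc.prems .
  finally show ?case using d_pos[OF Suc.prems] by (simp add: divide_le_eq mult.commute)
qed (use assms in simp)

lemma iter_le_of_column_bound:
  assumes "0 \<le> \<theta>" "\<theta> < 1" and "\<And>l. l \<in> S \<Longrightarrow> (\<Sum>i\<in>S-{l}. q i l) \<le> \<theta> * d l"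
    and "j \<in> S"
  shows "iter n j \<le> (\<Sum>i\<in>S. b i) / (1 - \<theta>) / d j"
proof -
  have weighted: "(\<Sum>i\<in>S. d i * iter n i) \<le> (\<Sum>i\<in>S. b i) / (1 - \<theta>)"
  proof (induction n)
    case (Suc n)
    have step: "d i * iter (Suc n) i = b i + (\<Sum>l\<in>S-{i}. q i l * iter n l)" if "i \<in> S" for i
      using d_pos[OF that] by simp
    have "(\<Sum>i\<in>S. d i * iter (Suc n) i) = (\<Sum>i\<in>S. b i + (\<Sum>l\<in>S-{i}. q i l * iter n l))"
      by (rule sum.cong[OF refl], rule step)
    also have "\<dots> = (\<Sum>i\<in>S. b i) + (\<Sum>i\<in>S. \<Sum>l\<in>S-{i}. q i l * iter n l)"
      by (rule sum.distrib)
    also have "(\<Sum>i\<in>S. \<Sum>l\<in>S-{i}. q i l * iter n l) = (\<Sum>l\<in>S. (\<Sum>i\<in>S-{l}. q i l) * iter n l)"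
      by (subst sum_swap_off_diagonal[OF finite]) (simp add: sum_distrib_right)
    also have "\<dots> \<le> (\<Sum>l\<in>S. \<theta> * (d l * iter n l))"
    proof (rule sum_mono)
      fix l assume "l \<in> S"
      then have "(\<Sum>i\<in>S-{l}. q i l) * iter n l \<le> (\<theta> * d l) * iter n l"
        using assms(3) iter_nonneg by (intro mult_right_mono) auto
      then show "(\<Sum>i\<in>S-{l}. q i l) * iter n l \<le> \<theta> * (d l * iter n l)" by (simp only: mult.assoc)
    qed
    also have "\<dots> = \<theta> * (\<Sum>l\<in>S. d l * iter n l)"
      by (rule sum_distrib_left[symmetric])
    also have "\<dots> \<le> \<theta> * ((\<Sum>i\<in>S. b i) / (1 - \<theta>))"
      using Suc assms(1) by (rule mult_left_mono)
    finally show ?case using assms(2) by (simp add: field_simps)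
  qed (use assms b_nonneg in \<open>simp add: sum_nonneg\<close>)
  have "d j * iter n j \<le> (\<Sum>i\<in>S. d i * iter n i)"
    using assms(4) d_pos iter_nonneg finite
    by (intro member_le_sum) (auto intro!: mult_nonneg_nonneg simp: less_imp_le)
  then have "d j * iter n j \<le> (\<Sum>i\<in>S. b i) / (1 - \<theta>)" using weighted by linarith
  then show ?thesis using d_pos[OF assms(4)] assms(2) by (simp add: field_simps)
qed

lemma solution_exists:
  assumes bounded: "\<And>n i. i \<in> S \<Longrightarrow> iter n i \<le> C i"
  shows "\<exists>y. \<forall>i\<in>S. b i / d i \<le> y i \<and> d i * y i = b i + (\<Sum>l\<in>S-{i}. q i l * y l)"
proof -
  define y where "y i = lim (\<lambda>n. iter n i)" for i
  have conv: "(\<lambda>n. iter n i) \<longlonglongrightarrow> y i" and upper: "iter n i \<le> y i" if "i \<in> S" for i n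
  proof -
    have "incseq (\<lambda>n. iter n i)" using iter_mono that by (simp add: incseq_SucI)
    moreover have "\<forall>n. iter n i \<le> C i" using bounded that by blast
    ultimately obtain L where "(\<lambda>n. iter n i) \<longlonglongrightarrow> L" "\<forall>n. iter n i \<le> L"
      by (rule incseq_convergent)
    then show "(\<lambda>n. iter n i) \<longlonglongrightarrow> y i" "iter n i \<le> y i" by (auto simp: y_def limI)
  qed
  show ?thesis
  proof (intro exI ballI conjI)
    fix i assume i: "i \<in> S"
    show "b i / d i \<le> y i" using upper[OF i, of 1] by simp
    have "(\<lambda>n. iter (Suc n) i) \<longlonglongrightarrow> (b i + (\<Sum>l\<in>S-{i}. q i l * y l)) / d i"
      using conv d_pos[OF i] by (auto intro!: tendsto_intros)
    then have "y i = (b i + (\<Sum>l\<in>S-{i}. q i l * y l)) / d i"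
      using LIMSEQ_unique LIMSEQ_Suc[OF conv[OF i]] by blast
    then show "d i * y i = b i + (\<Sum>l\<in>S-{i}. q i l * y l)" using d_pos[OF i] by simp
  qed
qed

end

section \<open>The quadratic map of (R3) and its Picard iteration\<close>

lemma arrow_idx_forward: "arrow_idx N i j k \<Longrightarrow> m \<in> {1..N} - {i, j} \<Longrightarrow> arrow_idx N m j k"
  by (auto simp: arrow_idx_def)

lemma arrow_idx_backward: "arrow_idx N i j k \<Longrightarrow> m \<in> {1..N} - {i} \<Longrightarrow> arrow_idx N m i (-k)"
  by (auto simp: arrow_idx_def)

definition Phi ::
  "nat \<Rightarrow> (nat \<Rightarrow> nat \<Rightarrow> int \<Rightarrow> real) \<Rightarrow> (nat \<Rightarrow> nat \<Rightarrow> int \<Rightarrow> 'a::real_normed_field) \<Rightarrow> nat \<Rightarrow> nat \<Rightarrow> int \<Rightarrow> 'a"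
  where
  "Phi N p x i j k = of_real (p i j k) + (\<Sum>m\<in>{1..N}-{i,j}. of_real (p i m k) * x m j k)
     + (\<Sum>m\<in>{1..N}-{i}. of_real (p i m (-k)) * x m i (-k) * x i j k)"

text \<open>The derivative of Phi at the constant family 1 in direction v, see Phi_one_minus.\<close>
definition Phi_deriv ::
  "nat \<Rightarrow> (nat \<Rightarrow> nat \<Rightarrow> int \<Rightarrow> real) \<Rightarrow> (nat \<Rightarrow> nat \<Rightarrow> int \<Rightarrow> real) \<Rightarrow> nat \<Rightarrow> nat \<Rightarrow> int \<Rightarrow> real"
  where
  "Phi_deriv N p v i j k = (\<Sum>m\<in>{1..N}-{i,j}. p i m k * v m j k)
     + (\<Sum>m\<in>{1..N}-{i}. p i m (-k) * (v m i (-k) + v i j k))"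

lemma R_family_Phi_iff:
  "R_family N p eps R \<longleftrightarrow>
     (\<forall>i j k. arrow_idx N i j k \<longrightarrow> R i j k holomorphic_on ball 0 (1 + eps)) \<and>
     (\<forall>i j k. arrow_idx N i j k \<longrightarrow> (\<forall>l::real. 0 < l \<and> l \<le> 1 \<longrightarrow>
        (\<exists>r::real. 0 < r \<and> r < 1 \<and> R i j k (complex_of_real l) = complex_of_real r))) \<and>
     (\<forall>i j k. arrow_idx N i j k \<longrightarrow>
        (\<forall>z \<in> ball 0 (1 + eps). R i j k z = z * Phi N p (\<lambda>a b c. R a b c z) i j k))"
  by (simp add: R_family_def Phi_def)

lemma Phi_diff:
  "Phi N p X i j k - Phi N p Y i j k =
     (\<Sum>m\<in>{1..N}-{i,j}. of_real (p i m k) * (X m j k - Y m j k)) +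
     (\<Sum>m\<in>{1..N}-{i}. of_real (p i m (-k)) * (X m i (-k) * X i j k - Y m i (-k) * Y i j k))"
  by (simp add: Phi_def right_diff_distrib sum_subtractf mult.assoc)

lemma Phi_of_real:
  "Phi N p (\<lambda>a b c. of_real (X a b c)) i j k = (of_real (Phi N p X i j k) :: 'a::real_normed_field)"
  by (simp add: Phi_def of_real_sum)

primrec picard_iter ::
  "nat \<Rightarrow> (nat \<Rightarrow> nat \<Rightarrow> int \<Rightarrow> real) \<Rightarrow> nat \<Rightarrow> 'a::real_normed_field \<Rightarrow> nat \<Rightarrow> nat \<Rightarrow> int \<Rightarrow> 'a"
  where
  "picard_iter N p 0 z = (\<lambda>i j k. 0)"
| "picard_iter N p (Suc n) z = (\<lambda>i j k. z * Phi N p (picard_iter N p n z) i j k)"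

definition picard_limit :: "nat \<Rightarrow> (nat \<Rightarrow> nat \<Rightarrow> int \<Rightarrow> real) \<Rightarrow> nat \<Rightarrow> nat \<Rightarrow> int \<Rightarrow> complex \<Rightarrow> complex"
  where "picard_limit N p i j k z = lim (\<lambda>n. picard_iter N p n z i j k)"

lemma picard_iter_of_real:
  "picard_iter N p n (of_real t) = (\<lambda>a b c. (of_real (picard_iter N p n t a b c) :: 'a::real_normed_field))"
proof (induction n)
  case (Suc n)
  then show ?case by (simp only: picard_iter.simps Phi_of_real of_real_mult)
qed (simp add: fun_eq_iff)

lemma picard_iter_holomorphic: "(\<lambda>z. picard_iter N p n z i j k) holomorphic_on UNIV"
proof (induction n arbitrary: i j k)
  case (Suc n)
  then show ?case by (auto simp: Phi_def intro!: holomorphic_intros)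
qed simp

section \<open>Stationary measures and hitting costs\<close>

locale arrow_chain =
  fixes N :: nat and p :: "nat \<Rightarrow> nat \<Rightarrow> int \<Rightarrow> real"
  assumes three_le_N: "3 \<le> N"
    and p_pos: "\<And>i j k. arrow_idx N i j k \<Longrightarrow> 0 < p i j k"
    and p_sum: "\<And>i. i \<in> {1..N} \<Longrightarrow> (\<Sum>j\<in>{1..N}-{i}. \<Sum>k\<in>{-1, 1::int}. p i j k) = 1"
begin

definition sign_prob :: "int \<Rightarrow> nat \<Rightarrow> real" where
  "sign_prob k i = (\<Sum>m\<in>{1..N}-{i}. p i m k)"

lemma exists_other_vertex: "i \<in> {1..N} \<Longrightarrow> \<exists>j\<in>{1..N}. j \<noteq> i"
  using three_le_N by (cases "i = 1") (auto intro: bexI[of _ 1] bexI[of _ 2])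

lemma sign_prob_split:
  assumes "i \<in> {1..N}" "j \<in> {1..N}" "i \<noteq> j"
  shows "sign_prob k i = p i j k + (\<Sum>m\<in>{1..N}-{i,j}. p i m k)"
proof -
  have "{1..N}-{i,j} = {1..N}-{i}-{j}" by auto
  then show ?thesis unfolding sign_prob_def using assms by (simp add: sum.remove[of _ j])
qed

lemma sign_prob_pos:
  assumes "i \<in> {1..N}" "k \<in> {-1, 1}"
  shows "0 < sign_prob k i"
proof -
  have "{1..N}-{i} \<noteq> {}" using exists_other_vertex[OF assms(1)] by auto
  then show ?thesis
    unfolding sign_prob_def using assms by (intro sum_pos) (auto simp: arrow_idx_def intro: p_pos)
qed

lemma sign_prob_add_opposite:
  assumes "i \<in> {1..N}" "k \<in> {-1, 1}"
  shows "sign_prob k i + sign_prob (-k) i = 1"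
  using p_sum[OF assms(1)] assms(2) by (auto simp: sign_prob_def sum.distrib)

definition stationary :: "int \<Rightarrow> (nat \<Rightarrow> real) \<Rightarrow> bool" where
  "stationary k \<pi> \<longleftrightarrow> (\<forall>m\<in>{1..N}. 0 < \<pi> m) \<and>
     (\<forall>m'\<in>{1..N}. (\<Sum>m\<in>{1..N}-{m'}. \<pi> m * p m m' k) = \<pi> m' * sign_prob k m')"

text \<open>The total flow along k-arrows out of all vertices equals the total flow into them, so
  balance at all vertices but one forces balance at the last one.\<close>
lemma balance_at_last_vertex:
  assumes i: "i \<in> {1..N}"
    and balance: "\<And>m'. m' \<in> {1..N}-{i} \<Longrightarrow> (\<Sum>m\<in>{1..N}-{m'}. \<pi> m * p m m' k) = \<pi> m' * sign_prob k m'"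
  shows "(\<Sum>m\<in>{1..N}-{i}. \<pi> m * p m i k) = \<pi> i * sign_prob k i"
proof -
  let ?inflow = "\<lambda>m'. (\<Sum>m\<in>{1..N}-{m'}. \<pi> m * p m m' k)"
  have "(\<Sum>m'\<in>{1..N}. ?inflow m') = (\<Sum>m\<in>{1..N}. \<Sum>m'\<in>{1..N}-{m}. \<pi> m * p m m' k)"
    by (rule sum_swap_off_diagonal[symmetric]) simp
  also have "\<dots> = (\<Sum>m'\<in>{1..N}. \<pi> m' * sign_prob k m')"
    by (simp add: sign_prob_def sum_distrib_left)
  finally have "?inflow i + (\<Sum>m'\<in>{1..N}-{i}. ?inflow m') =
      \<pi> i * sign_prob k i + (\<Sum>m'\<in>{1..N}-{i}. \<pi> m' * sign_prob k m')"
    using i by (simp add: sum.remove)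
  moreover have "(\<Sum>m'\<in>{1..N}-{i}. ?inflow m') = (\<Sum>m'\<in>{1..N}-{i}. \<pi> m' * sign_prob k m')"
    using balance by (rule sum.cong[OF refl])
  ultimately show ?thesis by simp
qed

text \<open>The balance equations at all vertices except 1, normalised by \<pi> 1 = 1.  The iteration
  stays bounded because every vertex passes a fixed fraction of its mass on to vertex 1.\<close>
lemma stationary_equation_solvable:
  assumes k: "k \<in> {-1, 1}"
  shows "\<exists>y. \<forall>m\<in>{1..N}-{1}. 0 < y m \<and>
           sign_prob k m * y m = p 1 m k + (\<Sum>l\<in>{1..N}-{1}-{m}. p l m k * y l)"
proof -
  define S where "S = {1..N} - {1::nat}"
  have one: "1 \<in> {1..N}" using three_le_N by simp
  have S_iff: "m \<in> S \<longleftrightarrow> m \<in> {1..N} \<and> m \<noteq> 1" for m by (auto simp: S_def)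
  have P_pos: "m \<in> S \<Longrightarrow> 0 < sign_prob k m" for m using k by (simp add: S_iff sign_prob_pos)
  have p_S: "m \<in> S \<Longrightarrow> m' \<in> {1..N} \<Longrightarrow> m' \<noteq> m \<Longrightarrow> 0 < p m m' k" for m m'
    using k by (intro p_pos) (auto simp: S_iff arrow_idx_def)
  interpret sys: nonneg_linear_system S "sign_prob k" "\<lambda>m. p 1 m k" "\<lambda>m l. p l m k"
    using P_pos p_S p_pos k by unfold_locales (auto simp: S_def arrow_idx_def intro: less_imp_le)
  obtain \<delta> where \<delta>: "0 < \<delta>" "\<delta> \<le> 1" "\<And>m. m \<in> S \<Longrightarrow> \<delta> \<le> p m 1 k / sign_prob k m"
    using finite_positive_lower_bound[of S "\<lambda>m. p m 1 k / sign_prob k m"] P_pos p_S one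
    by (auto simp: S_def)
  have leak: "(\<Sum>l\<in>S-{m}. p m l k) \<le> (1 - \<delta>) * sign_prob k m" if "m \<in> S" for m
  proof -
    have "S - {m} = {1..N}-{m,1}" by (auto simp: S_def)
    then have "(\<Sum>l\<in>S-{m}. p m l k) = sign_prob k m - p m 1 k"
      using sign_prob_split[of m 1 k] that one by (simp add: S_iff)
    then show ?thesis using \<delta>(3)[OF that] P_pos[OF that] by (simp add: field_simps)
  qed
  have bounded: "sys.iter n m \<le> (\<Sum>l\<in>S. p 1 l k) / (1 - (1 - \<delta>)) / sign_prob k m"
    if "m \<in> S" for n m
    by (rule sys.iter_le_of_column_bound[OF _ _ leak that]) (use \<delta> in auto)
  obtain y where y: "\<forall>m\<in>S. p 1 m k / sign_prob k m \<le> y m \<and>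
      sign_prob k m * y m = p 1 m k + (\<Sum>l\<in>S-{m}. p l m k * y l)"
    using sys.solution_exists[OF bounded] by blast
  have "0 < y m" if "m \<in> S" for m
  proof -
    have "arrow_idx N 1 m k" using that k one by (auto simp: S_iff arrow_idx_def)
    then have "0 < p 1 m k / sign_prob k m" using P_pos[OF that] p_pos by simp
    then show ?thesis using y that by (meson order.strict_trans2)
  qed
  then show ?thesis using y unfolding S_def by blast
qed

lemma stationary_exists:
  assumes k: "k \<in> {-1, 1}"
  obtains \<pi> where "stationary k \<pi>"
proof -
  obtain y where y: "\<And>m. m \<in> {1..N}-{1} \<Longrightarrow> 0 < y m \<and>
      sign_prob k m * y m = p 1 m k + (\<Sum>l\<in>{1..N}-{1}-{m}. p l m k * y l)"
    using stationary_equation_solvable[OF k] by blast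
  define \<pi> where "\<pi> = y(1 := 1)"
  have one: "(1::nat) \<in> {1..N}" using three_le_N by simp
  have balance: "(\<Sum>m\<in>{1..N}-{m'}. \<pi> m * p m m' k) = \<pi> m' * sign_prob k m'"
    if m': "m' \<in> {1..N}-{1}" for m'
  proof -
    have "(\<Sum>m\<in>{1..N}-{m'}. \<pi> m * p m m' k) = p 1 m' k + (\<Sum>m\<in>{1..N}-{m'}-{1}. \<pi> m * p m m' k)"
      using m' one by (simp add: sum.remove[of _ 1] \<pi>_def)
    also have "(\<Sum>m\<in>{1..N}-{m'}-{1}. \<pi> m * p m m' k) = (\<Sum>l\<in>{1..N}-{1}-{m'}. p l m' k * y l)"
      by (intro sum.cong) (auto simp: \<pi>_def Diff_insert2[symmetric] insert_commute)
    finally show ?thesis using y[OF m'] m' by (simp add: \<pi>_def mult.commute)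
  qed
  have "stationary k \<pi>"
    unfolding stationary_def
    using y balance balance_at_last_vertex[OF one balance] by (auto simp: \<pi>_def)
  then show ?thesis by (rule that)
qed

lemma hitting_equation_solvable:
  assumes j: "j \<in> {1..N}" and k: "k \<in> {-1, 1}" and s: "\<And>i. i \<in> {1..N}-{j} \<Longrightarrow> 0 < s i"
  shows "\<exists>f. \<forall>i\<in>{1..N}-{j}. 0 < f i \<and> sign_prob k i * f i = s i + (\<Sum>m\<in>{1..N}-{i,j}. p i m k * f m)"
proof -
  define S where "S = {1..N} - {j}"
  have S_minus: "S - {i} = {1..N}-{i,j}" for i by (auto simp: S_def)
  have P_pos: "i \<in> S \<Longrightarrow> 0 < sign_prob k i" for i using k by (simp add: S_def sign_prob_pos)
  have p_S: "i \<in> S \<Longrightarrow> m \<in> {1..N} \<Longrightarrow> m \<noteq> i \<Longrightarrow> 0 < p i m k" for i m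
    using k by (intro p_pos) (auto simp: S_def arrow_idx_def)
  interpret sys: nonneg_linear_system S "sign_prob k" s "\<lambda>i m. p i m k"
    using P_pos p_S s by unfold_locales (auto simp: S_def intro: less_imp_le)
  text \<open>A constant supersolution: every vertex passes the fraction p i j k of its mass to j.\<close>
  define G where "G = (\<Sum>i\<in>S. s i / p i j k)"
  have "0 \<le> G" unfolding G_def using s p_S j by (intro sum_nonneg) (auto simp: S_def less_imp_le)
  moreover have "s i + (\<Sum>l\<in>S-{i}. p i l k * G) \<le> sign_prob k i * G" if i: "i \<in> S" for i
  proof -
    have "s i / p i j k \<le> G"
      unfolding G_def using i s p_S j by (intro member_le_sum) (auto simp: S_def less_imp_le)
    then have "s i \<le> p i j k * G" using p_S[OF i j] i by (simp add: S_def divide_le_eq mult.commute)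
    moreover have "i \<in> {1..N}" "i \<noteq> j" using i by (auto simp: S_def)
    then have "(\<Sum>l\<in>S-{i}. p i l k * G) = (sign_prob k i - p i j k) * G"
      using sign_prob_split[of i j k] j by (simp add: S_minus sum_distrib_right[symmetric])
    ultimately show ?thesis by (simp add: algebra_simps)
  qed
  ultimately have "sys.iter n i \<le> G" if "i \<in> S" for n i
    using sys.iter_le_supersolution[where g = "\<lambda>_. G"] that by blast
  then obtain f where f: "\<forall>i\<in>S. s i / sign_prob k i \<le> f i \<and>
      sign_prob k i * f i = s i + (\<Sum>l\<in>S-{i}. p i l k * f l)"
    using sys.solution_exists[where C = "\<lambda>_. G"] by blast
  have "0 < f i" if "i \<in> S" for i
  proof -
    have "0 < s i / sign_prob k i" using s P_pos that by (simp add: S_def)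
    then show ?thesis using f that by (meson order.strict_trans2)
  qed
  then have "\<forall>i\<in>S. 0 < f i \<and> sign_prob k i * f i = s i + (\<Sum>m\<in>{1..N}-{i,j}. p i m k * f m)"
    using f by (simp add: S_minus)
  then show ?thesis unfolding S_def by (rule exI[of _ f])
qed

text \<open>Cycle formula: read f m as the cost collected at rate s by the walk along k-arrows,
  started at m, before it hits i.  Then the stationary flow out of i, weighted by the cost
  still to come, equals the stationary cost rate of all other vertices.\<close>
lemma excursion_identity:
  assumes i: "i \<in> {1..N}" and \<pi>: "stationary k \<pi>"
    and f: "\<And>m. m \<in> {1..N}-{i} \<Longrightarrow> sign_prob k m * f m = s m + (\<Sum>l\<in>{1..N}-{m,i}. p m l k * f l)"
  shows "\<pi> i * (\<Sum>l\<in>{1..N}-{i}. p i l k * f l) = (\<Sum>m\<in>{1..N}-{i}. \<pi> m * s m)"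
proof -
  define S where "S = {1..N} - {i}"
  have S_minus: "S - {m} = {1..N}-{m,i}" for m by (auto simp: S_def)
  have inflow: "(\<Sum>m\<in>S-{l}. \<pi> m * p m l k) = \<pi> l * sign_prob k l - \<pi> i * p i l k" if "l \<in> S" for l
  proof -
    have "(\<Sum>m\<in>{1..N}-{l}. \<pi> m * p m l k) = \<pi> i * p i l k + (\<Sum>m\<in>S-{l}. \<pi> m * p m l k)"
      using i that by (simp add: S_def sum.remove[of _ i] Diff_insert2[symmetric] insert_commute)
    then show ?thesis using \<pi> that by (simp add: stationary_def S_def)
  qed
  have "(\<Sum>m\<in>S. \<pi> m * s m) = (\<Sum>m\<in>S. \<pi> m * sign_prob k m * f m - (\<Sum>l\<in>S-{m}. \<pi> m * p m l k * f l))"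
  proof (rule sum.cong[OF refl])
    fix m assume m: "m \<in> S"
    then have "s m = sign_prob k m * f m - (\<Sum>l\<in>S-{m}. p m l k * f l)"
      using f unfolding S_minus by (simp add: S_def)
    then show "\<pi> m * s m = \<pi> m * sign_prob k m * f m - (\<Sum>l\<in>S-{m}. \<pi> m * p m l k * f l)"
      by (simp add: right_diff_distrib sum_distrib_left mult.assoc)
  qed
  also have "\<dots> = (\<Sum>m\<in>S. \<pi> m * sign_prob k m * f m) - (\<Sum>m\<in>S. \<Sum>l\<in>S-{m}. \<pi> m * p m l k * f l)"
    by (rule sum_subtractf)
  also have "(\<Sum>m\<in>S. \<Sum>l\<in>S-{m}. \<pi> m * p m l k * f l) = (\<Sum>l\<in>S. \<Sum>m\<in>S-{l}. \<pi> m * p m l k * f l)"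
    by (rule sum_swap_off_diagonal) (simp add: S_def)
  also have "\<dots> = (\<Sum>l\<in>S. (\<pi> l * sign_prob k l - \<pi> i * p i l k) * f l)"
    using inflow by (intro sum.cong refl) (simp add: sum_distrib_right[symmetric])
  also have "(\<Sum>m\<in>S. \<pi> m * sign_prob k m * f m) - \<dots> = \<pi> i * (\<Sum>l\<in>S. p i l k * f l)"
    by (simp add: left_diff_distrib sum_subtractf sum_distrib_left mult.assoc)
  finally show ?thesis unfolding S_def by simp
qed

section \<open>A strict supersolution\<close>

lemma Phi_weights_sum:
  assumes "arrow_idx N i j k"
  shows "p i j k + (\<Sum>m\<in>{1..N}-{i,j}. p i m k) + (\<Sum>m\<in>{1..N}-{i}. p i m (-k)) = 1"
  using assms sign_prob_split[of i j k] sign_prob_add_opposite[of i k]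
  by (simp add: arrow_idx_def sign_prob_def)

lemma Phi_one_minus:
  assumes "arrow_idx N i j k"
  shows "Phi N p (\<lambda>a b c. 1 - \<epsilon> * v a b c) i j k
    = 1 - \<epsilon> * Phi_deriv N p v i j k + \<epsilon>\<^sup>2 * v i j k * (\<Sum>m\<in>{1..N}-{i}. p i m (-k) * v m i (-k))"
proof -
  define A1 where "A1 = (\<Sum>m\<in>{1..N}-{i,j}. p i m k)"
  define A2 where "A2 = (\<Sum>m\<in>{1..N}-{i}. p i m (-k))"
  define X where "X = (\<Sum>m\<in>{1..N}-{i,j}. p i m k * v m j k)"
  define E where "E = (\<Sum>m\<in>{1..N}-{i}. p i m (-k) * v m i (-k))"
  have "(\<Sum>m\<in>{1..N}-{i,j}. p i m k * (1 - \<epsilon> * v m j k)) = A1 - \<epsilon> * X"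
    by (simp add: A1_def X_def right_diff_distrib sum_subtractf sum_distrib_left mult_ac)
  moreover have "(\<Sum>m\<in>{1..N}-{i}. p i m (-k) * (1 - \<epsilon> * v m i (-k)) * (1 - \<epsilon> * v i j k))
      = (A2 - \<epsilon> * E) * (1 - \<epsilon> * v i j k)"
    by (simp add: A2_def E_def right_diff_distrib sum_subtractf sum_distrib_left sum_distrib_right mult_ac)
  ultimately have "Phi N p (\<lambda>a b c. 1 - \<epsilon> * v a b c) i j k
      = p i j k + (A1 - \<epsilon> * X) + (A2 - \<epsilon> * E) * (1 - \<epsilon> * v i j k)"
    by (simp add: Phi_def)
  moreover have "Phi_deriv N p v i j k = X + E + A2 * v i j k"
    by (simp add: Phi_deriv_def X_def E_def A2_def distrib_left sum.distrib sum_distrib_right)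
  moreover have "p i j k + A1 + A2 = 1" using Phi_weights_sum[OF assms] by (simp add: A1_def A2_def)
  ultimately show ?thesis
    unfolding E_def[symmetric] by (simp add: algebra_simps power2_eq_square)
qed

lemma Phi_deriv_minus_self:
  assumes "arrow_idx N i j k"
    and "sign_prob k i * v i j k = \<sigma> + (\<Sum>m\<in>{1..N}-{i,j}. p i m k * v m j k)"
  shows "Phi_deriv N p v i j k - v i j k = (\<Sum>m\<in>{1..N}-{i}. p i m (-k) * v m i (-k)) - \<sigma>"
proof -
  have "Phi_deriv N p v i j k = (\<Sum>m\<in>{1..N}-{i,j}. p i m k * v m j k)
      + (\<Sum>m\<in>{1..N}-{i}. p i m (-k) * v m i (-k)) + sign_prob (-k) i * v i j k"
    by (simp add: Phi_deriv_def sign_prob_def distrib_left sum.distrib sum_distrib_right)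
  moreover have "sign_prob (-k) i = 1 - sign_prob k i"
    using sign_prob_add_opposite assms(1) by (force simp: arrow_idx_def)
  ultimately show ?thesis using assms(2) by (simp add: algebra_simps)
qed

lemma expanding_of_hitting_costs:
  assumes a: "arrow_idx N i j k" and \<pi>: "stationary (-k) \<pi>"
    and cost: "\<pi> i * c k i < (\<Sum>m\<in>{1..N}-{i}. \<pi> m * c (-k) m)"
    and hit: "sign_prob k i * v i j k = c k i + (\<Sum>m\<in>{1..N}-{i,j}. p i m k * v m j k)"
    and return: "\<And>m. m \<in> {1..N}-{i} \<Longrightarrow>
      sign_prob (-k) m * v m i (-k) = c (-k) m + (\<Sum>l\<in>{1..N}-{m,i}. p m l (-k) * v l i (-k))"
  shows "v i j k < Phi_deriv N p v i j k"
proof -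
  have i: "i \<in> {1..N}" using a by (simp add: arrow_idx_def)
  have "\<pi> i * (\<Sum>l\<in>{1..N}-{i}. p i l (-k) * v l i (-k)) = (\<Sum>m\<in>{1..N}-{i}. \<pi> m * c (-k) m)"
    (is "_ * ?return = _")
    using return by (rule excursion_identity[OF i \<pi>])
  then have "\<pi> i * c k i < \<pi> i * ?return" using cost by simp
  moreover have "0 < \<pi> i" using \<pi> i by (simp add: stationary_def)
  ultimately have "c k i < ?return" by (simp add: mult_less_cancel_left_pos)
  then show ?thesis using Phi_deriv_minus_self[where v = v, OF a hit] by simp
qed

lemma exists_expanding_direction:
  "\<exists>v. \<forall>i j k. arrow_idx N i j k \<longrightarrow> 0 < v i j k \<and> v i j k < Phi_deriv N p v i j k"
proof -
  obtain \<alpha> where \<alpha>: "stationary 1 \<alpha>" by (rule stationary_exists[of 1]) auto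
  obtain \<beta> where \<beta>: "stationary (-1) \<beta>" by (rule stationary_exists[of "-1"]) auto
  define \<pi> :: "int \<Rightarrow> nat \<Rightarrow> real" where "\<pi> k = (if k = 1 then \<alpha> else \<beta>)" for k
  have \<pi>: "stationary k (\<pi> k)" if "k \<in> {-1, 1}" for k using that \<alpha> \<beta> by (auto simp: \<pi>_def)
  obtain s t where pos: "\<And>i. i \<in> {1..N} \<Longrightarrow> 0 < s i" "\<And>i. i \<in> {1..N} \<Longrightarrow> 0 < t i"
    and dom: "\<And>i. i \<in> {1..N} \<Longrightarrow> \<beta> i * s i < (\<Sum>m\<in>{1..N}-{i}. \<beta> m * t m)"
      "\<And>i. i \<in> {1..N} \<Longrightarrow> \<alpha> i * t i < (\<Sum>m\<in>{1..N}-{i}. \<alpha> m * s m)"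
    using exists_cross_dominated_costs[of "{1..N}" \<alpha> \<beta>] \<alpha> \<beta> three_le_N
    by (auto simp: stationary_def)
  define cost :: "int \<Rightarrow> nat \<Rightarrow> real" where "cost k = (if k = 1 then s else t)" for k
  have cost_pos: "0 < cost k i" if "i \<in> {1..N}" for k i using pos that by (simp add: cost_def)
  have cost_dom: "\<pi> (-k) i * cost k i < (\<Sum>m\<in>{1..N}-{i}. \<pi> (-k) m * cost (-k) m)"
    if "i \<in> {1..N}" "k \<in> {-1, 1}" for i k
    using that dom[OF that(1)] by (auto simp: \<pi>_def cost_def)
  define hitting where "hitting j k f \<longleftrightarrow> (\<forall>i\<in>{1..N}-{j}. 0 < f i \<and>
      sign_prob k i * f i = cost k i + (\<Sum>m\<in>{1..N}-{i,j}. p i m k * f m))" for j k f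
  have "\<exists>f. hitting j k f" if "j \<in> {1..N}" "k \<in> {-1, 1}" for j k
    unfolding hitting_def by (rule hitting_equation_solvable[OF that]) (simp add: cost_pos)
  then obtain F where F: "\<And>j k. j \<in> {1..N} \<Longrightarrow> k \<in> {-1, 1} \<Longrightarrow> hitting j k (F j k)"
    by metis
  define v where "v i j k = F j k i" for i j k
  have "0 < v i j k \<and> v i j k < Phi_deriv N p v i j k" if a: "arrow_idx N i j k" for i j k
  proof -
    have ijk: "i \<in> {1..N}" "j \<in> {1..N}" "k \<in> {-1, 1}" "-k \<in> {-1, 1}"
      using a by (auto simp: arrow_idx_def)
    have "0 < v i j k" using F[OF ijk(2,3)] a by (auto simp: hitting_def v_def arrow_idx_def)
    moreover have "v i j k < Phi_deriv N p v i j k"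
      using F[OF ijk(2,3)] F[OF ijk(1,4)] a
      by (intro expanding_of_hitting_costs[OF a \<pi>[OF ijk(4)] cost_dom[OF ijk(1,3)]])
        (auto simp: hitting_def v_def arrow_idx_def)
    ultimately show ?thesis ..
  qed
  then show ?thesis by blast
qed

definition arrows :: "(nat \<times> nat \<times> int) set" where
  "arrows = {(i, j, k). arrow_idx N i j k}"

lemma finite_arrows: "finite arrows"
proof (rule finite_subset)
  show "arrows \<subseteq> {1..N} \<times> {1..N} \<times> {-1, 1}" by (auto simp: arrows_def arrow_idx_def)
qed simp

lemma arrows_positive_lower_bound:
  fixes f :: "nat \<Rightarrow> nat \<Rightarrow> int \<Rightarrow> real"
  assumes "\<And>i j k. arrow_idx N i j k \<Longrightarrow> 0 < f i j k"
  shows "\<exists>d>0. \<forall>i j k. arrow_idx N i j k \<longrightarrow> d \<le> f i j k"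
proof -
  have "\<And>a. a \<in> arrows \<Longrightarrow> 0 < (case a of (i, j, k) \<Rightarrow> f i j k)"
    using assms by (auto simp: arrows_def)
  then obtain d where d: "0 < d" "\<And>a. a \<in> arrows \<Longrightarrow> d \<le> (case a of (i, j, k) \<Rightarrow> f i j k)"
    using finite_positive_lower_bound[OF finite_arrows, of "\<lambda>a. case a of (i, j, k) \<Rightarrow> f i j k"]
    by blast
  have "d \<le> f i j k" if "arrow_idx N i j k" for i j k
    using d(2)[of "(i, j, k)"] that by (simp add: arrows_def)
  then show ?thesis using d(1) by blast
qed

lemma return_sum_pos:
  assumes a: "arrow_idx N i j k" and v: "\<And>a b c. arrow_idx N a b c \<Longrightarrow> 0 < v a b c"
  shows "0 < (\<Sum>m\<in>{1..N}-{i}. p i m (-k) * v m i (-k))"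
proof -
  have "0 < p i m (-k) * v m i (-k)" if "m \<in> {1..N}-{i}" for m
  proof -
    have "arrow_idx N i m (-k)" "arrow_idx N m i (-k)" using a that by (auto simp: arrow_idx_def)
    then show ?thesis using p_pos v by simp
  qed
  moreover have "{1..N}-{i} \<noteq> {}" using a by (auto simp: arrow_idx_def)
  ultimately show ?thesis by (intro sum_pos) auto
qed

lemma Phi_one_minus_le:
  assumes a: "arrow_idx N i j k" and "0 \<le> \<epsilon>"
    and small: "\<epsilon> * (v i j k * (\<Sum>m\<in>{1..N}-{i}. p i m (-k) * v m i (-k)))
      \<le> (Phi_deriv N p v i j k - v i j k) / 2"
  shows "Phi N p (\<lambda>a b c. 1 - \<epsilon> * v a b c) i j k
    \<le> 1 - \<epsilon> * v i j k - \<epsilon> * (Phi_deriv N p v i j k - v i j k) / 2"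
proof -
  let ?E = "\<Sum>m\<in>{1..N}-{i}. p i m (-k) * v m i (-k)" and ?D = "Phi_deriv N p v i j k"
  have "Phi N p (\<lambda>a b c. 1 - \<epsilon> * v a b c) i j k = 1 - \<epsilon> * ?D + \<epsilon> * (\<epsilon> * (v i j k * ?E))"
    using Phi_one_minus[OF a, of \<epsilon> v] by (simp add: power2_eq_square mult.assoc)
  moreover have "\<epsilon> * (\<epsilon> * (v i j k * ?E)) \<le> \<epsilon> * ((?D - v i j k) / 2)"
    using small \<open>0 \<le> \<epsilon>\<close> by (rule mult_left_mono)
  moreover have "\<epsilon> * ((?D - v i j k) / 2) = \<epsilon> * ?D / 2 - \<epsilon> * v i j k / 2"
    "\<epsilon> * (?D - v i j k) / 2 = \<epsilon> * ?D / 2 - \<epsilon> * v i j k / 2"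
    by (simp_all add: field_simps)
  ultimately show ?thesis by linarith
qed

lemma exists_strict_supersolution:
  obtains u :: "nat \<Rightarrow> nat \<Rightarrow> int \<Rightarrow> real" and \<rho> :: real where "1 < \<rho>"
    and "\<And>i j k. arrow_idx N i j k \<Longrightarrow> 0 \<le> u i j k \<and> u i j k \<le> 1 \<and> \<rho> * Phi N p u i j k \<le> u i j k"
proof -
  obtain v where v: "\<And>i j k. arrow_idx N i j k \<Longrightarrow> 0 < v i j k \<and> v i j k < Phi_deriv N p v i j k"
    using exists_expanding_direction by blast
  define E where "E i k = (\<Sum>m\<in>{1..N}-{i}. p i m (-k) * v m i (-k))" for i k
  define g where "g i j k = Phi_deriv N p v i j k - v i j k" for i j k
  have E_pos: "0 < E i k" if "arrow_idx N i j k" for i j k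
    unfolding E_def using that by (rule return_sum_pos) (use v in blast)
  have g_pos: "0 < g i j k" if "arrow_idx N i j k" for i j k using v[OF that] by (simp add: g_def)
  have "0 < min (1 / v i j k) (min (g i j k / (2 * v i j k * E i k)) (g i j k))"
    if "arrow_idx N i j k" for i j k
    using v[OF that] E_pos[OF that] g_pos[OF that] by simp
  then obtain \<epsilon> where \<epsilon>: "0 < \<epsilon>" "\<And>i j k. arrow_idx N i j k \<Longrightarrow>
      \<epsilon> \<le> min (1 / v i j k) (min (g i j k / (2 * v i j k * E i k)) (g i j k))"
    using arrows_positive_lower_bound[where
        f = "\<lambda>i j k. min (1 / v i j k) (min (g i j k / (2 * v i j k * E i k)) (g i j k))"]
    by blast
  define u where "u = (\<lambda>i j k. 1 - \<epsilon> * v i j k)"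
  define \<eta> where "\<eta> = \<epsilon> * \<epsilon> / 2"
  have "0 \<le> u i j k \<and> u i j k \<le> 1 \<and> (1 + \<eta>) * Phi N p u i j k \<le> u i j k"
    if a: "arrow_idx N i j k" for i j k
  proof -
    have pos: "0 < v i j k" "0 < E i k" using v[OF a] E_pos[OF a] by auto
    have small: "\<epsilon> * v i j k \<le> 1" "\<epsilon> * (v i j k * E i k) \<le> g i j k / 2"
      using \<epsilon>(2)[OF a] pos by (auto simp: field_simps)
    have "Phi N p u i j k \<le> u i j k - \<epsilon> * g i j k / 2"
      using Phi_one_minus_le[OF a _ small(2)[unfolded E_def g_def]] \<epsilon>(1)
      by (simp add: u_def g_def)
    also have "\<dots> \<le> u i j k - \<eta>"
      using mult_left_mono[of \<epsilon> "g i j k" \<epsilon>] \<epsilon>(1) \<epsilon>(2)[OF a] by (simp add: \<eta>_def)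
    finally have "Phi N p u i j k \<le> u i j k - \<eta>" .
    moreover have "0 \<le> u i j k" "u i j k \<le> 1" using small(1) \<epsilon>(1) pos(1) by (simp_all add: u_def)
    moreover have "0 \<le> \<eta>" by (simp add: \<eta>_def)
    ultimately show ?thesis using one_add_mult_le by blast
  qed
  moreover have "1 < 1 + \<eta>" using \<epsilon>(1) by (simp add: \<eta>_def)
  ultimately show ?thesis using that by blast
qed

section \<open>Existence\<close>

lemma Phi_majorant:
  fixes X Y :: "nat \<Rightarrow> nat \<Rightarrow> int \<Rightarrow> 'a::real_normed_field" and TX TY :: "nat \<Rightarrow> nat \<Rightarrow> int \<Rightarrow> real"
  assumes X: "\<And>a b c. arrow_idx N a b c \<Longrightarrow> norm (X a b c) \<le> TX a b c"
    and Y: "\<And>a b c. arrow_idx N a b c \<Longrightarrow> norm (Y a b c) \<le> TY a b c"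
    and XY: "\<And>a b c. arrow_idx N a b c \<Longrightarrow> norm (X a b c - Y a b c) \<le> TX a b c - TY a b c"
    and a: "arrow_idx N i j k"
  shows "norm (Phi N p X i j k - Phi N p Y i j k) \<le> Phi N p TX i j k - Phi N p TY i j k"
proof -
  have p_nonneg: "0 \<le> p i m k'" if "arrow_idx N i m k'" for m k' using p_pos[OF that] by simp
  have "norm (of_real (p i m k) * (X m j k - Y m j k)) \<le> p i m k * (TX m j k - TY m j k)"
    if "m \<in> {1..N}-{i,j}" for m
    using XY[OF arrow_idx_forward[OF a that]] p_nonneg[of m k] a that
    by (auto simp: norm_mult arrow_idx_def intro: mult_left_mono)
  moreover have "norm (of_real (p i m (-k)) * (X m i (-k) * X i j k - Y m i (-k) * Y i j k))
      \<le> p i m (-k) * (TX m i (-k) * TX i j k - TY m i (-k) * TY i j k)"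
    if "m \<in> {1..N}-{i}" for m
    using norm_mult_diff_le[OF X XY Y XY, OF arrow_idx_backward[OF a that] _ a a]
      p_nonneg[of m "-k"] a that
    by (auto simp: norm_mult arrow_idx_def intro: mult_left_mono)
  ultimately show ?thesis
    unfolding Phi_diff by (intro order_trans[OF norm_triangle_ineq] add_mono sum_norm_le)
      (simp_all add: right_diff_distrib sum_subtractf)
qed

lemma Phi_mono:
  fixes X Y :: "nat \<Rightarrow> nat \<Rightarrow> int \<Rightarrow> real"
  assumes "\<And>a b c. arrow_idx N a b c \<Longrightarrow> 0 \<le> X a b c \<and> X a b c \<le> Y a b c"
    and "arrow_idx N i j k"
  shows "Phi N p X i j k \<le> Phi N p Y i j k"
proof -
  have "norm (Phi N p Y i j k - Phi N p X i j k) \<le> Phi N p Y i j k - Phi N p X i j k"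
    using assms by (intro Phi_majorant) (auto intro: order_trans)
  then show ?thesis using norm_ge_zero order_trans by fastforce
qed

lemma picard_iter_majorant:
  assumes "norm (z :: 'a::real_normed_field) \<le> t" and "arrow_idx N i j k"
  shows "norm (picard_iter N p n z i j k) \<le> picard_iter N p n t i j k"
    and "norm (picard_iter N p (Suc n) z i j k - picard_iter N p n z i j k)
      \<le> picard_iter N p (Suc n) t i j k - picard_iter N p n t i j k"
proof -
  have "\<forall>i j k. arrow_idx N i j k \<longrightarrow> norm (picard_iter N p n z i j k) \<le> picard_iter N p n t i j k \<and>
      norm (picard_iter N p (Suc n) z i j k - picard_iter N p n z i j k)
        \<le> picard_iter N p (Suc n) t i j k - picard_iter N p n t i j k"
  proof (induction n)
    case 0
    have "norm z * \<bar>p i j k\<bar> \<le> t * p i j k" if "arrow_idx N i j k" for i j k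
      using assms(1) p_pos[OF that] by (simp add: mult_right_mono)
    then show ?case by (simp add: Phi_def norm_mult)
  next
    case (Suc n)
    let ?x = "picard_iter N p (Suc n) z" and ?y = "picard_iter N p n z"
    let ?tx = "picard_iter N p (Suc n) t" and ?ty = "picard_iter N p n t"
    have y: "norm (?y a b c) \<le> ?ty a b c"
      and d: "norm (?x a b c - ?y a b c) \<le> ?tx a b c - ?ty a b c" if "arrow_idx N a b c" for a b c
      using Suc that by (simp_all only: picard_iter.simps(2))
    have x: "norm (?x a b c) \<le> ?tx a b c" if "arrow_idx N a b c" for a b c
      using y[OF that] d[OF that] norm_triangle_ineq[of "?x a b c - ?y a b c" "?y a b c"] by simp
    have "norm (picard_iter N p (Suc (Suc n)) z a b c - ?x a b c)
        \<le> picard_iter N p (Suc (Suc n)) t a b c - ?tx a b c" if "arrow_idx N a b c" for a b c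
    proof -
      have "norm (Phi N p ?x a b c - Phi N p ?y a b c) \<le> Phi N p ?tx a b c - Phi N p ?ty a b c"
        using x y d that by (rule Phi_majorant)
      then have "norm z * norm (Phi N p ?x a b c - Phi N p ?y a b c) \<le> t * (Phi N p ?tx a b c - Phi N p ?ty a b c)"
        using assms(1) order_trans[OF norm_ge_zero assms(1)] by (intro mult_mono) auto
      then show ?thesis by (simp only: picard_iter.simps(2) right_diff_distrib[symmetric] norm_mult)
    qed
    then show ?case using x by blast
  qed
  then show "norm (picard_iter N p n z i j k) \<le> picard_iter N p n t i j k"
    and "norm (picard_iter N p (Suc n) z i j k - picard_iter N p n z i j k)
      \<le> picard_iter N p (Suc n) t i j k - picard_iter N p n t i j k"
    using assms(2) by blast+
qed

lemma picard_iter_real_mono: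
  fixes t :: real
  assumes "0 \<le> t" and "arrow_idx N i j k"
  shows "0 \<le> picard_iter N p n t i j k" and "picard_iter N p n t i j k \<le> picard_iter N p (Suc n) t i j k"
  using picard_iter_majorant[of t t, OF _ assms(2)] assms(1) norm_ge_zero order_trans
  by fastforce+

lemma picard_iter_uniformly_convergent:
  fixes t :: real
  assumes "0 \<le> t" and a: "arrow_idx N i j k" and "convergent (\<lambda>n. picard_iter N p n t i j k)"
  shows "uniformly_convergent_on (cball 0 t) (\<lambda>n (z::complex). picard_iter N p n z i j k)"
proof -
  obtain L where "(\<lambda>n. picard_iter N p n t i j k) \<longlonglongrightarrow> L" using assms(3) by (auto simp: convergent_def)
  then have "summable (\<lambda>n. picard_iter N p (Suc n) t i j k - picard_iter N p n t i j k)"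
    by (rule telescope_summable)
  then have "uniformly_convergent_on (cball 0 t)
      (\<lambda>n z. \<Sum>m<n. picard_iter N p (Suc m) z i j k - picard_iter N p m (z::complex) i j k)"
    using picard_iter_majorant(2)[OF _ a] by (intro Weierstrass_m_test') auto
  moreover have "(\<Sum>m<n. picard_iter N p (Suc m) z i j k - picard_iter N p m z i j k)
      = picard_iter N p n z i j k" for n and z :: complex
    using sum_lessThan_telescope[of "\<lambda>m. picard_iter N p m z i j k" n] by simp
  ultimately show ?thesis by simp
qed

lemma picard_iter_limit_fixed_point:
  fixes X :: "nat \<Rightarrow> nat \<Rightarrow> int \<Rightarrow> 'a::real_normed_field"
  assumes lim: "\<And>a b c. arrow_idx N a b c \<Longrightarrow> (\<lambda>n. picard_iter N p n z a b c) \<longlonglongrightarrow> X a b c"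
    and a: "arrow_idx N i j k"
  shows "X i j k = z * Phi N p X i j k"
proof (rule LIMSEQ_unique)
  show "(\<lambda>n. picard_iter N p (Suc n) z i j k) \<longlonglongrightarrow> X i j k" using lim[OF a] by (rule LIMSEQ_Suc)
  show "(\<lambda>n. picard_iter N p (Suc n) z i j k) \<longlonglongrightarrow> z * Phi N p X i j k"
    unfolding picard_iter.simps Phi_def
    using lim[OF a] lim[OF arrow_idx_forward[OF a]] lim[OF arrow_idx_backward[OF a]]
    by (intro tendsto_intros tendsto_sum) auto
qed

lemma Phi_nonneg:
  fixes X :: "nat \<Rightarrow> nat \<Rightarrow> int \<Rightarrow> real"
  assumes "\<And>a b c. arrow_idx N a b c \<Longrightarrow> 0 \<le> X a b c" and a: "arrow_idx N i j k"
  shows "0 \<le> Phi N p X i j k"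
proof -
  have "Phi N p (\<lambda>_ _ _. 0) i j k \<le> Phi N p X i j k" using assms by (intro Phi_mono) auto
  then show ?thesis using p_pos[OF a] by (simp add: Phi_def)
qed

context
  fixes u :: "nat \<Rightarrow> nat \<Rightarrow> int \<Rightarrow> real" and \<rho> :: real
  assumes rho_gt_1: "1 < \<rho>"
    and supersolution: "\<And>i j k. arrow_idx N i j k \<Longrightarrow> 0 \<le> u i j k \<and> u i j k \<le> 1 \<and> \<rho> * Phi N p u i j k \<le> u i j k"
begin

lemma picard_iter_le_supersolution:
  fixes t :: real
  assumes t: "0 \<le> t" "t \<le> \<rho>"
  shows "arrow_idx N i j k \<Longrightarrow> picard_iter N p n t i j k \<le> u i j k"
proof (induction n arbitrary: i j k)
  case 0
  then show ?case using supersolution by simp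
next
  case (Suc n)
  have "t * Phi N p (picard_iter N p n t) i j k \<le> t * Phi N p u i j k"
    using Suc picard_iter_real_mono(1)[OF t(1)] t(1) by (intro mult_left_mono Phi_mono) auto
  also have "\<dots> \<le> \<rho> * Phi N p u i j k"
    using t(2) Phi_nonneg[OF _ Suc.prems] supersolution by (intro mult_right_mono) auto
  also have "\<dots> \<le> u i j k" using supersolution[OF Suc.prems] by simp
  finally show ?case by simp
qed

lemma picard_iter_real_convergent:
  fixes t :: real
  assumes "0 \<le> t" "t \<le> \<rho>" and a: "arrow_idx N i j k"
  shows "convergent (\<lambda>n. picard_iter N p n t i j k)"
proof -
  have "incseq (\<lambda>n. picard_iter N p n t i j k)"
    using picard_iter_real_mono(2)[OF assms(1) a] by (rule incseq_SucI)
  then show ?thesis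
    using picard_iter_le_supersolution[OF assms] by (metis incseq_convergent convergent_def)
qed

lemma picard_limit_uniform_limit:
  assumes "arrow_idx N i j k"
  shows "uniform_limit (cball 0 \<rho>) (\<lambda>n z. picard_iter N p n z i j k) (picard_limit N p i j k) sequentially"
proof -
  have "0 \<le> \<rho>" using rho_gt_1 by simp
  then have "uniformly_convergent_on (cball 0 \<rho>) (\<lambda>n (z::complex). picard_iter N p n z i j k)"
    using assms picard_iter_real_convergent[OF _ order_refl assms]
    by (rule picard_iter_uniformly_convergent) fact
  then show ?thesis by (simp only: uniformly_convergent_uniform_limit_iff picard_limit_def[abs_def])
qed

lemma picard_limit_holomorphic:
  assumes "arrow_idx N i j k"
  shows "picard_limit N p i j k holomorphic_on ball 0 \<rho>"
proof -
  have "\<forall>\<^sub>F n in sequentially. continuous_on (cball 0 \<rho>) (\<lambda>z::complex. picard_iter N p n z i j k) \<and>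
      (\<lambda>z. picard_iter N p n z i j k) holomorphic_on ball 0 \<rho>"
  proof (intro always_eventually allI conjI)
    fix n
    show "(\<lambda>z. picard_iter N p n z i j k) holomorphic_on ball 0 \<rho>"
      using picard_iter_holomorphic[of N p n i j k] by (rule holomorphic_on_subset) simp
    show "continuous_on (cball 0 \<rho>) (\<lambda>z::complex. picard_iter N p n z i j k)"
      using holomorphic_on_imp_continuous_on[OF picard_iter_holomorphic[of N p n i j k]]
      by (rule continuous_on_subset) simp
  qed
  then show ?thesis
    using holomorphic_uniform_limit[OF _ picard_limit_uniform_limit[OF assms]] by auto
qed

lemma picard_limit_fixed_point:
  assumes "z \<in> cball 0 \<rho>" and "arrow_idx N i j k"
  shows "picard_limit N p i j k z = z * Phi N p (\<lambda>a b c. picard_limit N p a b c z) i j k"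
proof (rule picard_iter_limit_fixed_point[OF _ assms(2)])
  fix a b c assume "arrow_idx N a b c"
  from tendsto_uniform_limitI[OF picard_limit_uniform_limit[OF this] assms(1)]
  show "(\<lambda>n. picard_iter N p n z a b c) \<longlonglongrightarrow> picard_limit N p a b c z" .
qed

lemma picard_limit_real_range:
  assumes l: "0 < l" "l \<le> 1" and a: "arrow_idx N i j k"
  shows "\<exists>r. 0 < r \<and> r < 1 \<and> picard_limit N p i j k (of_real l) = of_real r"
proof -
  define L where "L a b c = lim (\<lambda>n. picard_iter N p n l a b c)" for a b c
  have l_le: "0 \<le> l" "l \<le> \<rho>" using l rho_gt_1 by auto
  have L: "(\<lambda>n. picard_iter N p n l a b c) \<longlonglongrightarrow> L a b c" if "arrow_idx N a b c" for a b c
    using picard_iter_real_convergent[OF l_le that] by (simp add: L_def convergent_LIMSEQ_iff)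
  have "(\<lambda>n. picard_iter N p n (complex_of_real l) i j k) \<longlonglongrightarrow> of_real (L i j k)"
    unfolding picard_iter_of_real using L[OF a] by (rule tendsto_of_real)
  then have limit: "picard_limit N p i j k (of_real l) = of_real (L i j k)"
    unfolding picard_limit_def by (rule limI)
  have L_bounds: "0 \<le> L a b c \<and> L a b c \<le> u a b c" if "arrow_idx N a b c" for a b c
  proof
    show "0 \<le> L a b c"
      using picard_iter_real_mono(1)[OF l_le(1) that] by (intro LIMSEQ_le_const[OF L[OF that]]) blast
    show "L a b c \<le> u a b c"
      using picard_iter_le_supersolution[OF l_le that] by (intro LIMSEQ_le_const2[OF L[OF that]]) blast
  qed
  have "incseq (\<lambda>n. picard_iter N p n l i j k)"
    using picard_iter_real_mono(2)[OF l_le(1) a] by (rule incseq_SucI)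
  then have "picard_iter N p 1 l i j k \<le> L i j k" using L[OF a] by (rule incseq_le)
  moreover have "0 < picard_iter N p 1 l i j k" using l p_pos[OF a] by (simp add: Phi_def)
  moreover have "L i j k = l * Phi N p L i j k"
    using L by (rule picard_iter_limit_fixed_point[OF _ a])
  moreover have "0 \<le> Phi N p L i j k" "Phi N p L i j k \<le> Phi N p u i j k"
    using L_bounds by (auto intro: Phi_nonneg[OF _ a] Phi_mono[OF _ a])
  then have "l * Phi N p L i j k \<le> Phi N p u i j k"
    using l mult_left_le_one_le[of "Phi N p L i j k" l] by linarith
  moreover have "Phi N p u i j k < 1"
  proof (rule ccontr)
    assume "\<not> Phi N p u i j k < 1"
    then have "\<rho> * 1 \<le> \<rho> * Phi N p u i j k" using rho_gt_1 by (intro mult_left_mono) auto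
    then show False using supersolution[OF a] rho_gt_1 by linarith
  qed
  ultimately have "0 < L i j k \<and> L i j k < 1" by linarith
  then show ?thesis using limit by blast
qed

lemma R_family_picard_limit: "R_family N p (\<rho> - 1) (picard_limit N p)"
  unfolding R_family_Phi_iff
  using picard_limit_holomorphic picard_limit_real_range picard_limit_fixed_point by auto

end

section \<open>Uniqueness\<close>

lemma Phi_lipschitz:
  fixes X Y :: "nat \<Rightarrow> nat \<Rightarrow> int \<Rightarrow> 'a::real_normed_field"
  assumes X: "\<And>a b c. arrow_idx N a b c \<Longrightarrow> norm (X a b c) \<le> 1"
    and Y: "\<And>a b c. arrow_idx N a b c \<Longrightarrow> norm (Y a b c) \<le> 1"
    and XY: "\<And>a b c. arrow_idx N a b c \<Longrightarrow> norm (X a b c - Y a b c) \<le> S"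
    and a: "arrow_idx N i j k"
  shows "norm (Phi N p X i j k - Phi N p Y i j k) \<le> 2 * S"
proof -
  have S: "0 \<le> S" using XY[OF a] norm_ge_zero order_trans by blast
  have p_nonneg: "0 \<le> p i m k'" if "arrow_idx N i m k'" for m k' using p_pos[OF that] by simp
  have "norm (of_real (p i m k) * (X m j k - Y m j k)) \<le> p i m k * (2 * S)"
    if "m \<in> {1..N}-{i,j}" for m
    using XY[OF arrow_idx_forward[OF a that]] p_nonneg[of m k] a that S
    by (auto simp: norm_mult arrow_idx_def intro!: mult_left_mono)
  moreover have "norm (of_real (p i m (-k)) * (X m i (-k) * X i j k - Y m i (-k) * Y i j k))
      \<le> p i m (-k) * (2 * S)" if m: "m \<in> {1..N}-{i}" for m
  proof -
    have b: "arrow_idx N m i (-k)" using arrow_idx_backward[OF a m] .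
    have "X m i (-k) * X i j k - Y m i (-k) * Y i j k
        = X m i (-k) * (X i j k - Y i j k) + (X m i (-k) - Y m i (-k)) * Y i j k"
      by (simp add: algebra_simps)
    then have "norm (X m i (-k) * X i j k - Y m i (-k) * Y i j k) \<le> 1 * S + S * 1"
      using X[OF b] XY[OF a] XY[OF b] Y[OF a] S
      by (metis norm_mult norm_triangle_le add_mono mult_mono norm_ge_zero zero_le_one)
    then show ?thesis using p_nonneg[of m "-k"] a m by (auto simp: norm_mult arrow_idx_def intro: mult_left_mono)
  qed
  ultimately have "norm (Phi N p X i j k - Phi N p Y i j k)
      \<le> ((\<Sum>m\<in>{1..N}-{i,j}. p i m k) + (\<Sum>m\<in>{1..N}-{i}. p i m (-k))) * (2 * S)"
    unfolding Phi_diff distrib_right sum_distrib_right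
    by (intro order_trans[OF norm_triangle_ineq] add_mono sum_norm_le) auto
  also have "\<dots> \<le> 1 * (2 * S)"
    using Phi_weights_sum[OF a] p_nonneg[of j k] a S by (intro mult_right_mono) auto
  finally show ?thesis by simp
qed

lemma small_fixed_points_eq:
  fixes X Y :: "nat \<Rightarrow> nat \<Rightarrow> int \<Rightarrow> 'a::real_normed_field"
  assumes fixed: "\<And>a b c. arrow_idx N a b c \<Longrightarrow> X a b c = w * Phi N p X a b c"
      "\<And>a b c. arrow_idx N a b c \<Longrightarrow> Y a b c = w * Phi N p Y a b c"
    and bounded: "\<And>a b c. arrow_idx N a b c \<Longrightarrow> norm (X a b c) \<le> 1"
      "\<And>a b c. arrow_idx N a b c \<Longrightarrow> norm (Y a b c) \<le> 1"
    and w: "2 * norm w < 1" and a: "arrow_idx N i j k"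
  shows "X i j k = Y i j k"
proof -
  define dist_at where "dist_at x = (case x of (a, b, c) \<Rightarrow> norm (X a b c - Y a b c))" for x
  define D where "D = Max (dist_at ` arrows)"
  have arrows_iff: "(a, b, c) \<in> arrows \<longleftrightarrow> arrow_idx N a b c" for a b c by (simp add: arrows_def)
  have le_D: "norm (X a b c - Y a b c) \<le> D" if "arrow_idx N a b c" for a b c
  proof -
    have "dist_at (a, b, c) \<le> D"
      unfolding D_def using finite_arrows that by (intro Max_ge) (auto simp: arrows_iff)
    then show ?thesis by (simp add: dist_at_def)
  qed
  have "D \<in> dist_at ` arrows"
    unfolding D_def using finite_arrows arrows_iff[of i j k] a by (intro Max_in) auto
  then obtain a' b' c' where a': "arrow_idx N a' b' c'" and D: "D = norm (X a' b' c' - Y a' b' c')"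
    by (auto simp: dist_at_def arrows_def)
  have "D = norm w * norm (Phi N p X a' b' c' - Phi N p Y a' b' c')"
    unfolding D fixed(1)[OF a'] fixed(2)[OF a'] by (simp add: right_diff_distrib[symmetric] norm_mult)
  also have "\<dots> \<le> norm w * (2 * D)"
    by (rule mult_left_mono[OF Phi_lipschitz[OF bounded le_D a']]) simp_all
  finally have contraction: "D \<le> (2 * norm w) * D" by (simp only: mult_ac)
  have "D \<le> 0"
  proof (rule ccontr)
    assume "\<not> D \<le> 0"
    then have "(2 * norm w) * D < 1 * D" using w by (intro mult_strict_right_mono) auto
    then show False using contraction by simp
  qed
  then have "norm (X i j k - Y i j k) \<le> 0" using le_D[OF a] by linarith
  then show ?thesis by simp
qed

lemma R_family_small_near_zero:
  assumes R: "R_family N p eps R" and eps: "0 < 1 + eps" and a: "arrow_idx N i j k"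
  shows "\<forall>\<^sub>F w in nhds 0. norm (R i j k w) < 1"
proof -
  have zero: "0 \<in> ball (0::complex) (1 + eps)" using eps by simp
  have "R i j k 0 = 0" using R zero a by (simp add: R_family_Phi_iff)
  moreover have "continuous_on (ball 0 (1 + eps)) (R i j k)"
    using R a by (simp add: R_family_Phi_iff holomorphic_on_imp_continuous_on)
  then have "isCont (R i j k) 0" using zero continuous_on_eq_continuous_at[OF open_ball] by blast
  then have "(R i j k \<longlongrightarrow> R i j k 0) (nhds 0)" unfolding isCont_def tendsto_at_iff_tendsto_nhds .
  ultimately have "((\<lambda>w. norm (R i j k w)) \<longlongrightarrow> 0) (nhds 0)" by (simp add: tendsto_norm_zero)
  then show ?thesis by (rule order_tendstoD) simp
qed

lemma R_family_unique:
  assumes R: "R_family N p eps R" and R': "R_family N p eps R'" and eps: "0 < 1 + eps"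
    and a: "arrow_idx N i j k" and z: "z \<in> ball 0 (1 + eps)"
  shows "R' i j k z = R i j k z"
proof -
  have "\<forall>\<^sub>F w in nhds 0. w \<in> ball 0 (1/2) \<inter> ball 0 (1 + eps) \<and>
      (\<forall>x\<in>arrows. case x of (a, b, c) \<Rightarrow> norm (R a b c w) < 1 \<and> norm (R' a b c w) < 1)"
    using eps R_family_small_near_zero[OF R eps] R_family_small_near_zero[OF R' eps]
    by (intro eventually_conj eventually_nhds_in_open eventually_ball_finite finite_arrows)
      (auto simp: arrows_def eventually_conj_iff)
  then obtain S where S: "open S" "0 \<in> S"
    and in_S: "\<And>w. w \<in> S \<Longrightarrow> w \<in> ball 0 (1/2) \<inter> ball 0 (1 + eps) \<and>
      (\<forall>a b c. arrow_idx N a b c \<longrightarrow> norm (R a b c w) < 1 \<and> norm (R' a b c w) < 1)"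
    unfolding eventually_nhds by (auto simp: arrows_def)
  have fixed: "X a b c w = w * Phi N p (\<lambda>a b c. X a b c w) a b c"
    if "R_family N p eps X" "arrow_idx N a b c" "w \<in> ball 0 (1 + eps)" for X a b c w
    using that by (simp add: R_family_Phi_iff)
  have "R' i j k w = R i j k w" if "w \<in> S" for w
  proof -
    have w: "w \<in> ball 0 (1 + eps)" "2 * norm w < 1" using in_S[OF that] by auto
    have bounded: "norm (R' a b c w) \<le> 1" "norm (R a b c w) \<le> 1" if "arrow_idx N a b c" for a b c
      using in_S[OF \<open>w \<in> S\<close>] that by (auto simp: less_imp_le)
    show ?thesis
      by (rule small_fixed_points_eq[OF fixed[OF R' _ w(1)] fixed[OF R _ w(1)] bounded w(2) a])
  qed
  moreover have "R' i j k holomorphic_on ball 0 (1 + eps)" "R i j k holomorphic_on ball 0 (1 + eps)"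
    using R R' a by (simp_all add: R_family_Phi_iff)
  moreover have "S \<noteq> {}" "S \<subseteq> ball 0 (1 + eps)" using S(2) in_S by auto
  ultimately show ?thesis
    using analytic_continuation_open[OF S(1) open_ball _ connected_ball _ _ _ _ z] by blast
qed

end

theorem proposition3p1:
  fixes N :: nat and p :: "nat \<Rightarrow> nat \<Rightarrow> int \<Rightarrow> real"
  assumes "N \<ge> 3"
    and "\<And>i j k. arrow_idx N i j k \<Longrightarrow> 0 < p i j k \<and> p i j k < 1"
    and "\<And>i. i \<in> {1..N} \<Longrightarrow> (\<Sum>j \<in> {1..N} - {i}. \<Sum>k \<in> {-1, 1::int}. p i j k) = 1"
  shows "\<exists>eps > 0. \<exists>R. R_family N p eps R \<and>
           (\<forall>R'. R_family N p eps R' \<longrightarrow>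
              (\<forall>i j k. arrow_idx N i j k \<longrightarrow> (\<forall>z \<in> ball 0 (1 + eps). R' i j k z = R i j k z)))"
proof -
  interpret arrow_chain N p using assms by unfold_locales auto
  show ?thesis
  proof (rule exists_strict_supersolution)
    fix u :: "nat \<Rightarrow> nat \<Rightarrow> int \<Rightarrow> real" and \<rho> :: real
    assume "1 < \<rho>"
      and "\<And>i j k. arrow_idx N i j k \<Longrightarrow> 0 \<le> u i j k \<and> u i j k \<le> 1 \<and> \<rho> * Phi N p u i j k \<le> u i j k"
    then have R: "R_family N p (\<rho> - 1) (picard_limit N p)" by (rule R_family_picard_limit)
    moreover have "\<forall>R'. R_family N p (\<rho> - 1) R' \<longrightarrow> (\<forall>i j k. arrow_idx N i j k \<longrightarrow>
        (\<forall>z \<in> ball 0 (1 + (\<rho> - 1)). R' i j k z = picard_limit N p i j k z))"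
      using R_family_unique[OF R] \<open>1 < \<rho>\<close> by simp
    moreover have "0 < \<rho> - 1" using \<open>1 < \<rho>\<close> by simp
    ultimately show ?thesis by blast
  qed
qed

end
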